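(* Let $n\ge3$ and let $Z=(z_1,\dots,z_n)$ be a non-degenerate $n$-gon. Then the 1-forms $\alpha_i=[z_{i+1}-z_i,\,dz_{i+1}+dz_i]$, $i=1,\dots,n$, are linearly independent at $Z$, and the intersection of their kernels at $Z$ equals the fiber $F(Z)$ of the dual Birkhoff distribution $\mathcal F$ at $Z$.
   Context: $[\cdot,\cdot]$ is the determinant of two plane vectors; for $z=(x,y)$, $[z_1,dz_2]$ denotes the 1-form $x_1dy_2-y_1dx_2$. Indices are cyclic. $G_n$ is the set of $n$-gons $(z_1,\dots,z_n)\in(\mathbb R^2)^n$ with $z_i\neq z_{i+1}$ for all $i$. An $n$-gon is non-degenerate if no three consecutive vertices $z_{i-1},z_i,z_{i+1}$ are collinear; the set of these is $U_n\subset G_n$. The dual Birkhoff distribution $\mathcal F$ on $G_n$: a tangent vector $W=(w_1,\dots,w_n)$ (velocities of the vertices) lies in $\mathcal F$ iff for each $i$ the induced motion of the line $z_iz_{i+1}$ is an infinitesimal rotation about the midpoint of $z_iz_{i+1}$; $\mathcal F$ is $n$-dimensional, and $W\in\mathcal F$ iff $[w_i+w_{i+1},z_{i+1}-z_i]=0$ for all $i$. *)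

theory Defs
  imports "HOL-Analysis.Analysis"
begin

text \<open>An n-gon is z :: nat => real*real, vertices
  z 0, ..., z (n-1), indices taken mod n. A tangent vector W is also nat => real*real
  (velocity w i of vertex i, for i < n).\<close>

definition det2 :: "real \<times> real \<Rightarrow> real \<times> real \<Rightarrow> real" where
  "det2 a b = fst a * snd b - snd a * fst b"

definition nxt :: "nat \<Rightarrow> nat \<Rightarrow> nat" where
  "nxt n i = Suc i mod n"

definition prv :: "nat \<Rightarrow> nat \<Rightarrow> nat" where
  "prv n i = (i + n - 1) mod n"

definition is_ngon :: "nat \<Rightarrow> (nat \<Rightarrow> real \<times> real) \<Rightarrow> bool" where
  "is_ngon n z \<longleftrightarrow> (\<forall>i<n. z i \<noteq> z (nxt n i))"

definition nondegenerate :: "nat \<Rightarrow> (nat \<Rightarrow> real \<times> real) \<Rightarrow> bool" where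
  "nondegenerate n z \<longleftrightarrow> is_ngon n z \<and>
     (\<forall>i<n. \<not> collinear {z (prv n i), z i, z (nxt n i)})"

definition alpha :: "nat \<Rightarrow> (nat \<Rightarrow> real \<times> real) \<Rightarrow> nat \<Rightarrow> (nat \<Rightarrow> real \<times> real) \<Rightarrow> real" where
  "alpha n z i W = det2 (z (nxt n i) - z i) (W (nxt n i) + W i)"

text \<open>Fiber of the dual Birkhoff distribution at Z: for each side, the induced motion of the
  line z_i z_{i+1} is an infinitesimal rotation about the midpoint, i.e. the midpoint of the
  side moves with velocity (w_i + w_{i+1})/2 along the line (zero normal velocity of the line
  at the midpoint).\<close>
definition birkhoff_fiber :: "nat \<Rightarrow> (nat \<Rightarrow> real \<times> real) \<Rightarrow> (nat \<Rightarrow> real \<times> real) set" where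
  "birkhoff_fiber n z = {W. \<forall>i<n. \<exists>t::real.
      (1/2) *\<^sub>R (W i + W (nxt n i)) = t *\<^sub>R (z (nxt n i) - z i)}"

end

theory Submission
  imports Defs
begin

text \<open>The form \<open>\<alpha>\<^sub>i\<close> involves only the velocities of the vertices \<open>i\<close> and \<open>i+1\<close>. Testing a
  relation \<open>\<Sum> c\<^sub>i \<alpha>\<^sub>i = 0\<close> on a motion of the single vertex \<open>j\<close> therefore leaves
  \<open>c\<^sub>j\<^sub>-\<^sub>1 (z\<^sub>j - z\<^sub>j\<^sub>-\<^sub>1) + c\<^sub>j (z\<^sub>j\<^sub>+\<^sub>1 - z\<^sub>j) = 0\<close>, and the two sides at \<open>z\<^sub>j\<close> are linearly
  independent by non-degeneracy, so \<open>c\<^sub>j = 0\<close>. The kernel of \<open>\<alpha>\<^sub>i\<close> consists of the \<open>W\<close> for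
  which the velocity \<open>(w\<^sub>i + w\<^sub>i\<^sub>+\<^sub>1)/2\<close> of the midpoint is parallel to the side \<open>z\<^sub>i\<^sub>+\<^sub>1 - z\<^sub>i\<close>,
  which is the defining condition of the Birkhoff fiber.\<close>

lemma det2_scaleR_right: "det2 a (r *\<^sub>R b) = r * det2 a b"
  by (simp add: det2_def algebra_simps)

lemma det2_eq_0_iff_parallel:
  assumes "u \<noteq> 0"
  shows "det2 u v = 0 \<longleftrightarrow> (\<exists>t. v = t *\<^sub>R u)"
proof
  assume det: "det2 u v = 0"
  have norm: "fst u ^ 2 + snd u ^ 2 \<noteq> 0"
    using assms by (simp add: sum_power2_eq_zero_iff prod_eq_iff)
  \<comment> \<open>the coefficient is the projection of v onto u\<close>
  define t where "t = (fst u * fst v + snd u * snd v) / (fst u ^ 2 + snd u ^ 2)"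
  have "fst v * (fst u ^ 2 + snd u ^ 2) = (fst u * fst v + snd u * snd v) * fst u"
       "snd v * (fst u ^ 2 + snd u ^ 2) = (fst u * fst v + snd u * snd v) * snd u"
    using det by (simp_all add: det2_def power2_eq_square algebra_simps)
  then have "v = t *\<^sub>R u"
    using norm by (simp add: t_def prod_eq_iff field_simps)
  then show "\<exists>t. v = t *\<^sub>R u" ..
qed (auto simp: det2_def)

lemma det2_eq_0_iff_collinear: "det2 u v = 0 \<longleftrightarrow> collinear {0, u, v}"
proof (cases "u = 0")
  case True
  then show ?thesis by (simp add: det2_def collinear_2)
next
  case False
  then show ?thesis
    by (auto simp: det2_eq_0_iff_parallel collinear_lemma intro: exI[of _ 0])
qed

lemma collinear_iff_det2: "collinear {a, b, c} \<longleftrightarrow> det2 (b - a) (c - b) = 0"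
proof -
  have "det2 (b - a) (c - b) = - det2 (a - b) (c - b)"
    by (simp add: det2_def algebra_simps)
  then show ?thesis
    using collinear_3[of a b c] by (simp add: NO_MATCH_def det2_eq_0_iff_collinear)
qed

lemma det2_left_eq_0:
  assumes "\<And>w. det2 v w = 0"
  shows "v = 0"
  using assms[of "(1, 0)"] assms[of "(0, 1)"] by (simp add: det2_def prod_eq_iff)

lemma nxt_less: "0 < n \<Longrightarrow> nxt n i < n"
  by (simp add: nxt_def)

lemma prv_less: "0 < n \<Longrightarrow> prv n i < n"
  by (simp add: prv_def)

lemma nxt_prv: "i < n \<Longrightarrow> nxt n (prv n i) = i"
  by (cases i) (auto simp: nxt_def prv_def)

lemma prv_nxt: "i < n \<Longrightarrow> prv n (nxt n i) = i"
  by (cases "Suc i = n") (auto simp: nxt_def prv_def)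

lemma prv_neq: "1 < n \<Longrightarrow> i < n \<Longrightarrow> prv n i \<noteq> i"
  by (cases i) (auto simp: prv_def)

lemma nxt_neq: "1 < n \<Longrightarrow> i < n \<Longrightarrow> nxt n i \<noteq> i"
  by (metis prv_neq prv_nxt nxt_less less_trans zero_less_one)

definition side :: "nat \<Rightarrow> (nat \<Rightarrow> real \<times> real) \<Rightarrow> nat \<Rightarrow> real \<times> real" where
  "side n z i = z (nxt n i) - z i"

lemma alpha_side: "alpha n z i W = det2 (side n z i) (W (nxt n i) + W i)"
  by (simp add: alpha_def side_def)

lemma side_neq_0: "is_ngon n z \<Longrightarrow> i < n \<Longrightarrow> side n z i \<noteq> 0"
  by (metis is_ngon_def side_def eq_iff_diff_eq_0)

lemma det2_consecutive_sides_neq_0: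
  assumes "nondegenerate n z" "i < n"
  shows "det2 (side n z (prv n i)) (side n z i) \<noteq> 0"
  using assms by (simp add: nondegenerate_def side_def nxt_prv collinear_iff_det2)

lemma alpha_single_vertex:
  assumes "1 < n" "i < n"
  shows "alpha n z i (\<lambda>k. if k = j then w else 0) =
    (if i = j \<or> nxt n i = j then det2 (side n z i) w else 0)"
  using nxt_neq[OF assms] by (auto simp: alpha_side det2_def)

lemma sum_alpha_single_vertex:
  assumes "1 < n" "j < n"
  shows "(\<Sum>i<n. c i * alpha n z i (\<lambda>k. if k = j then w else 0)) =
    det2 (c j *\<^sub>R side n z j + c (prv n j) *\<^sub>R side n z (prv n j)) w"
proof -
  have "{i \<in> {..<n}. i = j \<or> nxt n i = j} = {j, prv n j}"
    using assms prv_less[of n j] by (auto simp: nxt_prv prv_nxt)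
  then have "(\<Sum>i<n. c i * alpha n z i (\<lambda>k. if k = j then w else 0)) =
      (\<Sum>i\<in>{j, prv n j}. c i * det2 (side n z i) w)"
    using assms by (simp add: alpha_single_vertex if_distrib sum.inter_filter[symmetric] cong: if_cong)
  also have "\<dots> = c j * det2 (side n z j) w + c (prv n j) * det2 (side n z (prv n j)) w"
    using prv_neq[OF assms] by simp
  finally show ?thesis
    by (simp add: det2_def algebra_simps)
qed

lemma alpha_linear_independent:
  assumes "1 < n" "nondegenerate n z"
    and relation: "\<forall>W. (\<Sum>i<n. c i * alpha n z i W) = 0"
    and "j < n"
  shows "c j = 0"
proof -
  let ?p = "prv n j"
  have combination: "c j *\<^sub>R side n z j + c ?p *\<^sub>R side n z ?p = 0"
    using relation sum_alpha_single_vertex[OF \<open>1 < n\<close> \<open>j < n\<close>] by (intro det2_left_eq_0) metis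
  have "c j * det2 (side n z ?p) (side n z j) =
      det2 (side n z ?p) (c j *\<^sub>R side n z j + c ?p *\<^sub>R side n z ?p)"
    by (simp add: det2_def algebra_simps)
  also have "\<dots> = 0"
    by (simp add: combination det2_def)
  finally show ?thesis
    using det2_consecutive_sides_neq_0[OF assms(2,4)] by simp
qed

lemma alpha_eq_0_iff_midpoint_velocity_parallel:
  assumes "is_ngon n z" "i < n"
  shows "alpha n z i W = 0 \<longleftrightarrow> (\<exists>t. (1/2) *\<^sub>R (W i + W (nxt n i)) = t *\<^sub>R side n z i)"
proof -
  have "alpha n z i W = 0 \<longleftrightarrow> det2 (side n z i) ((1/2) *\<^sub>R (W i + W (nxt n i))) = 0"
    by (simp add: alpha_side det2_scaleR_right add.commute)
  also have "\<dots> \<longleftrightarrow> (\<exists>t. (1/2) *\<^sub>R (W i + W (nxt n i)) = t *\<^sub>R side n z i)"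
    using side_neq_0[OF assms] by (rule det2_eq_0_iff_parallel)
  finally show ?thesis .
qed

lemma kernel_alpha_eq_birkhoff_fiber:
  "is_ngon n z \<Longrightarrow> (\<forall>i<n. alpha n z i W = 0) \<longleftrightarrow> W \<in> birkhoff_fiber n z"
  by (simp add: alpha_eq_0_iff_midpoint_velocity_parallel birkhoff_fiber_def side_def)

theorem lemma2p2:
  fixes n :: nat and z :: "nat \<Rightarrow> real \<times> real"
  assumes "n \<ge> 3" and "nondegenerate n z"
  shows "(\<forall>c :: nat \<Rightarrow> real.
            (\<forall>W. (\<Sum>i<n. c i * alpha n z i W) = 0) \<longrightarrow> (\<forall>i<n. c i = 0))
       \<and> (\<forall>W. (\<forall>i<n. alpha n z i W = 0) \<longleftrightarrow> W \<in> birkhoff_fiber n z)"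
proof
  show "\<forall>c :: nat \<Rightarrow> real.
          (\<forall>W. (\<Sum>i<n. c i * alpha n z i W) = 0) \<longrightarrow> (\<forall>i<n. c i = 0)"
    using assms alpha_linear_independent[of n z] by simp
  have "is_ngon n z"
    using assms(2) by (simp add: nondegenerate_def)
  then show "\<forall>W. (\<forall>i<n. alpha n z i W = 0) \<longleftrightarrow> W \<in> birkhoff_fiber n z"
    by (simp add: kernel_alpha_eq_birkhoff_fiber)
qed

end
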